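(* Let $(X,\mathcal T,P,\leq,\{\sigma_x:x\in X\})$ be a typed topological space and $p\in P$. If $X$ is $p$-symmetrically typed and $\sigma$ has least $p$-neighborhood, then for all $x,y\in X$: $x\notin p\vdash U_{min}(y)$ if and only if $y\notin p\vdash U_{min}(x)$ (equivalently, $x\in p\vdash U_{min}(y)$ iff $y\in p\vdash U_{min}(x)$).
   Context: A typed topological space $(X,\mathcal T,P,\leq,\{\sigma_x:x\in X\})$ consists of a topological space $(X,\mathcal T)$, a partially ordered set $(P,\leq)$ of types, and for each $x\in X$ a partial function $\sigma_x:\{O\in\mathcal T:x\in O\}\to P$ such that for all $U,V$ in its domain, $\sigma_x(U)\leq\sigma_x(V)$ iff $U\subseteq V$. $U$ is a type-$p$ neighborhood of $x$ ($p\vdash U(x)$) if $U$ is in the domain of $\sigma_x$ and $\sigma_x(U)=p$. $\sigma$ has least $p$-neighborhood if every $x$ has a type-$p$ neighborhood $p\vdash U_{min}(x)$ contained in every type-$p$ neighborhood of $x$. $X$ is $p$-symmetrically typed if for any two points $x,y\in X$ such that $y\notin U$ for some type-$p$ neighborhood $U$ of $x$, there exists a type-$p$ neighborhood $V$ of $y$ with $x\notin V$. *)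

theory Defs
  imports "HOL-Analysis.Analysis"
begin

text \<open>A typed topological space: topology T on X = topspace T, the poset of types is the
  type 'p with its partial order, and sigma x is a partial function (option-valued) from the
  open neighbourhoods of x to types, reflecting inclusion.\<close>

definition typed_top_space :: "'a topology \<Rightarrow> ('a \<Rightarrow> 'a set \<Rightarrow> ('p::order) option) \<Rightarrow> bool" where
  "typed_top_space T \<sigma> \<longleftrightarrow>
     (\<forall>x \<in> topspace T.
        (\<forall>U. \<sigma> x U \<noteq> None \<longrightarrow> openin T U \<and> x \<in> U) \<and>
        (\<forall>U V. \<sigma> x U \<noteq> None \<and> \<sigma> x V \<noteq> None \<longrightarrow>
             (the (\<sigma> x U) \<le> the (\<sigma> x V) \<longleftrightarrow> U \<subseteq> V)))"

definition type_nbhd :: "('a \<Rightarrow> 'a set \<Rightarrow> 'p option) \<Rightarrow> 'p \<Rightarrow> 'a set \<Rightarrow> 'a \<Rightarrow> bool" where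
  "type_nbhd \<sigma> p U x \<longleftrightarrow> \<sigma> x U = Some p"

definition has_least_nbhd :: "'a topology \<Rightarrow> ('a \<Rightarrow> 'a set \<Rightarrow> 'p option) \<Rightarrow> 'p \<Rightarrow> bool" where
  "has_least_nbhd T \<sigma> p \<longleftrightarrow>
     (\<forall>x \<in> topspace T. \<exists>U. type_nbhd \<sigma> p U x \<and> (\<forall>V. type_nbhd \<sigma> p V x \<longrightarrow> U \<subseteq> V))"

text \<open>The least type-p neighbourhood of x (meaningful under has_least_nbhd).\<close>
definition U_min :: "('a \<Rightarrow> 'a set \<Rightarrow> 'p option) \<Rightarrow> 'p \<Rightarrow> 'a \<Rightarrow> 'a set" where
  "U_min \<sigma> p x = (THE U. type_nbhd \<sigma> p U x \<and> (\<forall>V. type_nbhd \<sigma> p V x \<longrightarrow> U \<subseteq> V))"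

definition p_symmetrically_typed :: "'a topology \<Rightarrow> ('a \<Rightarrow> 'a set \<Rightarrow> 'p option) \<Rightarrow> 'p \<Rightarrow> bool" where
  "p_symmetrically_typed T \<sigma> p \<longleftrightarrow>
     (\<forall>x \<in> topspace T. \<forall>y \<in> topspace T.
        (\<exists>U. type_nbhd \<sigma> p U x \<and> y \<notin> U) \<longrightarrow> (\<exists>V. type_nbhd \<sigma> p V y \<and> x \<notin> V))"

end

theory Submission
  imports Defs
begin

lemma U_min_eqI:
  assumes "type_nbhd \<sigma> p U x" and "\<And>V. type_nbhd \<sigma> p V x \<Longrightarrow> U \<subseteq> V"
  shows "U_min \<sigma> p x = U"
  unfolding U_min_def
proof (rule the_equality)
  fix W assume "type_nbhd \<sigma> p W x \<and> (\<forall>V. type_nbhd \<sigma> p V x \<longrightarrow> W \<subseteq> V)"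
  then show "W = U" using assms by blast
qed (use assms in blast)

lemma
  assumes "has_least_nbhd T \<sigma> p" and "x \<in> topspace T"
  shows U_min_type_nbhd: "type_nbhd \<sigma> p (U_min \<sigma> p x) x"
    and U_min_least: "type_nbhd \<sigma> p V x \<Longrightarrow> U_min \<sigma> p x \<subseteq> V"
proof -
  obtain U where U: "type_nbhd \<sigma> p U x" "\<And>V. type_nbhd \<sigma> p V x \<Longrightarrow> U \<subseteq> V"
    using assms unfolding has_least_nbhd_def by blast
  with U_min_eqI have "U_min \<sigma> p x = U" by metis
  with U show "type_nbhd \<sigma> p (U_min \<sigma> p x) x"
    and "type_nbhd \<sigma> p V x \<Longrightarrow> U_min \<sigma> p x \<subseteq> V" by auto
qed

lemma notin_U_min_iff_ex_type_nbhd: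
  assumes "has_least_nbhd T \<sigma> p" and "x \<in> topspace T"
  shows "y \<notin> U_min \<sigma> p x \<longleftrightarrow> (\<exists>U. type_nbhd \<sigma> p U x \<and> y \<notin> U)"
  using U_min_type_nbhd[OF assms] U_min_least[OF assms] by blast

lemma notin_U_min_sym:
  assumes "p_symmetrically_typed T \<sigma> p" and "has_least_nbhd T \<sigma> p"
    and "x \<in> topspace T" and "y \<in> topspace T"
    and "y \<notin> U_min \<sigma> p x"
  shows "x \<notin> U_min \<sigma> p y"
proof -
  from assms(5) obtain U where "type_nbhd \<sigma> p U x" "y \<notin> U"
    using notin_U_min_iff_ex_type_nbhd[OF assms(2,3)] by blast
  then obtain V where "type_nbhd \<sigma> p V y" "x \<notin> V"
    using assms(1,3,4) unfolding p_symmetrically_typed_def by blast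
  then show ?thesis
    using notin_U_min_iff_ex_type_nbhd[OF assms(2,4)] by blast
qed

theorem proposition2p17:
  fixes T :: "'a topology" and \<sigma> :: "'a \<Rightarrow> 'a set \<Rightarrow> ('p::order) option" and p :: 'p
  assumes "typed_top_space T \<sigma>"
    and "p_symmetrically_typed T \<sigma> p"
    and "has_least_nbhd T \<sigma> p"
    and "x \<in> topspace T" and "y \<in> topspace T"
  shows "x \<notin> U_min \<sigma> p y \<longleftrightarrow> y \<notin> U_min \<sigma> p x"
  using notin_U_min_sym[OF assms(2,3,4,5)] notin_U_min_sym[OF assms(2,3,5,4)] by blast

end
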